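(* Let $(W,S)$ be a Coxeter system with $S$ finite, $\phi:\operatorname{Ad}(Q_W)\to W$ the homomorphism $e_x\mapsto x$, and $C_W=\ker\phi$. Then $C_W$ is a central subgroup of $\operatorname{Ad}(Q_W)$.
   Context: A Coxeter system $(W,S)$: $S$ finite, $m:S\times S\to\mathbb{N}\cup\{\infty\}$ with $m(s,s)=1$, $2\le m(s,t)=m(t,s)\le\infty$ for $s\ne t$, $W=\langle s\in S\mid (st)^{m(s,t)}=1\ (m(s,t)<\infty)\rangle$. The Coxeter quandle is $Q_W=\bigcup_{w\in W}w^{-1}Sw$ with $x\ast y=yxy$, and $\operatorname{Ad}(Q_W)=\langle e_x\ (x\in Q_W)\mid e_y^{-1}e_xe_y=e_{x\ast y}\rangle$; $\phi$ is well defined. *)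

theory Defs
  imports "HOL-Algebra.Algebra" "HOL-Library.Extended_Nat"
begin

text \<open>A word over a generator set Gen is a list of letters (x, b), where b = True means
  the inverse letter x^-1.\<close>

type_synonym 'a word = "('a \<times> bool) list"

definition word_on :: "'a set \<Rightarrow> 'a word \<Rightarrow> bool" where
  "word_on Gen w \<longleftrightarrow> (\<forall>p\<in>set w. fst p \<in> Gen)"

inductive pres_eq :: "'a set \<Rightarrow> 'a word set \<Rightarrow> 'a word \<Rightarrow> 'a word \<Rightarrow> bool"
  for Gen :: "'a set" and R :: "'a word set" where
  refl: "word_on Gen w \<Longrightarrow> pres_eq Gen R w w"
| sym: "pres_eq Gen R u v \<Longrightarrow> pres_eq Gen R v u"
| trans: "pres_eq Gen R u v \<Longrightarrow> pres_eq Gen R v w \<Longrightarrow> pres_eq Gen R u w"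
| cancel: "x \<in> Gen \<Longrightarrow> word_on Gen u \<Longrightarrow> word_on Gen v \<Longrightarrow>
     pres_eq Gen R (u @ [(x, b), (x, \<not> b)] @ v) (u @ v)"
| relator: "r \<in> R \<Longrightarrow> word_on Gen r \<Longrightarrow> word_on Gen u \<Longrightarrow> word_on Gen v \<Longrightarrow>
     pres_eq Gen R (u @ r @ v) (u @ v)"

definition pres_class :: "'a set \<Rightarrow> 'a word set \<Rightarrow> 'a word \<Rightarrow> 'a word set" where
  "pres_class Gen R w = {v. pres_eq Gen R w v}"

definition presented_group :: "'a set \<Rightarrow> 'a word set \<Rightarrow> 'a word set monoid" where
  "presented_group Gen R =
     \<lparr> carrier = {pres_class Gen R w | w. word_on Gen w},
       monoid.mult = (\<lambda>A B. pres_class Gen R ((SOME a. a \<in> A) @ (SOME b. b \<in> B))),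
       one = pres_class Gen R [] \<rparr>"

definition gen_elem :: "'a set \<Rightarrow> 'a word set \<Rightarrow> 'a \<Rightarrow> 'a word set" where
  "gen_elem Gen R x = pres_class Gen R [(x, False)]"

definition eval_word :: "('b, 'm) monoid_scheme \<Rightarrow> ('a \<Rightarrow> 'b) \<Rightarrow> 'a word \<Rightarrow> 'b" where
  "eval_word H f w =
     foldr (\<lambda>(x, b) acc. (if b then inv\<^bsub>H\<^esub> (f x) else f x) \<otimes>\<^bsub>H\<^esub> acc) w \<one>\<^bsub>H\<^esub>"

text \<open>The homomorphism \<langle>Gen | R\<rangle> \<rightarrow> H induced by f (assumed well defined).\<close>

definition induced_hom :: "('b, 'm) monoid_scheme \<Rightarrow> ('a \<Rightarrow> 'b) \<Rightarrow> 'a word set \<Rightarrow> 'b" where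
  "induced_hom H f A = eval_word H f (SOME w. w \<in> A)"

definition coxeter_matrix :: "'a set \<Rightarrow> ('a \<Rightarrow> 'a \<Rightarrow> enat) \<Rightarrow> bool" where
  "coxeter_matrix S m \<longleftrightarrow> finite S \<and>
     (\<forall>s\<in>S. m s s = 1) \<and>
     (\<forall>s\<in>S. \<forall>t\<in>S. s \<noteq> t \<longrightarrow> 2 \<le> m s t \<and> m s t = m t s)"

definition coxeter_rels :: "'a set \<Rightarrow> ('a \<Rightarrow> 'a \<Rightarrow> enat) \<Rightarrow> 'a word set" where
  "coxeter_rels S m = {concat (replicate k [(s, False), (t, False)]) | s t k.
      s \<in> S \<and> t \<in> S \<and> m s t = enat k}"

definition coxeter_group :: "'a set \<Rightarrow> ('a \<Rightarrow> 'a \<Rightarrow> enat) \<Rightarrow> 'a word set monoid" where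
  "coxeter_group S m = presented_group S (coxeter_rels S m)"

definition coxeter_gen :: "'a set \<Rightarrow> ('a \<Rightarrow> 'a \<Rightarrow> enat) \<Rightarrow> 'a \<Rightarrow> 'a word set" where
  "coxeter_gen S m s = gen_elem S (coxeter_rels S m) s"

definition coxeter_quandle :: "'a set \<Rightarrow> ('a \<Rightarrow> 'a \<Rightarrow> enat) \<Rightarrow> 'a word set set" where
  "coxeter_quandle S m =
     {inv\<^bsub>coxeter_group S m\<^esub> w \<otimes>\<^bsub>coxeter_group S m\<^esub> coxeter_gen S m s
        \<otimes>\<^bsub>coxeter_group S m\<^esub> w | w s. w \<in> carrier (coxeter_group S m) \<and> s \<in> S}"

definition qop :: "'a set \<Rightarrow> ('a \<Rightarrow> 'a \<Rightarrow> enat) \<Rightarrow> 'a word set \<Rightarrow> 'a word set \<Rightarrow> 'a word set" where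
  "qop S m x y = y \<otimes>\<^bsub>coxeter_group S m\<^esub> x \<otimes>\<^bsub>coxeter_group S m\<^esub> y"

definition adj_rels :: "'a set \<Rightarrow> ('a \<Rightarrow> 'a \<Rightarrow> enat) \<Rightarrow> 'a word set word set" where
  "adj_rels S m = {[(y, True), (x, False), (y, False), (qop S m x y, True)] | x y.
      x \<in> coxeter_quandle S m \<and> y \<in> coxeter_quandle S m}"

definition adj_group :: "'a set \<Rightarrow> ('a \<Rightarrow> 'a \<Rightarrow> enat) \<Rightarrow> 'a word set word set monoid" where
  "adj_group S m = presented_group (coxeter_quandle S m) (adj_rels S m)"

definition adj_phi :: "'a set \<Rightarrow> ('a \<Rightarrow> 'a \<Rightarrow> enat) \<Rightarrow> 'a word set word set \<Rightarrow> 'a word set" where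
  "adj_phi S m = induced_hom (coxeter_group S m) id"

definition central_subgroup :: "'a set \<Rightarrow> ('a, 'm) monoid_scheme \<Rightarrow> bool" where
  "central_subgroup K G \<longleftrightarrow> subgroup K G \<and>
     (\<forall>z\<in>K. \<forall>g\<in>carrier G. z \<otimes>\<^bsub>G\<^esub> g = g \<otimes>\<^bsub>G\<^esub> z)"

end

theory Submission imports Defs begin

text \<open>The adjoint group acts on its generators through \<open>\<phi>\<close>: the defining relations say
  \<open>e(y)\<inverse> e(x) e(y) = e(y x y)\<close>, and since every reflection \<open>y \<in> Q\<^sub>W\<close> is an involution,
  induction on a word representing \<open>g\<close> gives \<open>g\<inverse> e(x) g = e(\<phi>(g)\<inverse> x \<phi>(g))\<close>. Hence an element
  of \<open>ker \<phi>\<close> commutes with every generator \<open>e(x)\<close>, and therefore with all of \<open>Ad(Q\<^sub>W)\<close>.\<close>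

lemma (in group) commute_inv:
  assumes "a \<in> carrier G" "z \<in> carrier G" "z \<otimes> a = a \<otimes> z"
  shows "z \<otimes> inv a = inv a \<otimes> z"
proof -
  have "inv a \<otimes> (z \<otimes> a) \<otimes> inv a = inv a \<otimes> (a \<otimes> z) \<otimes> inv a"
    by (simp only: assms(3))
  then have "inv a \<otimes> z \<otimes> a = z"
    using assms(1,2) by (simp add: m_assoc[symmetric])
  then show ?thesis
    using assms(1,2) by (simp add: inv_solve_right')
qed

lemma (in group) commute_mult:
  assumes "a \<in> carrier G" "b \<in> carrier G" "z \<in> carrier G"
    and "z \<otimes> a = a \<otimes> z" "z \<otimes> b = b \<otimes> z"
  shows "z \<otimes> (a \<otimes> b) = (a \<otimes> b) \<otimes> z"
proof -
  have "z \<otimes> (a \<otimes> b) = (z \<otimes> a) \<otimes> b" using assms(1-3) by (simp add: m_assoc)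
  also have "\<dots> = a \<otimes> (z \<otimes> b)" unfolding assms(4) using assms(1-3) by (simp add: m_assoc)
  also have "\<dots> = (a \<otimes> b) \<otimes> z" unfolding assms(5) using assms(1-3) by (simp add: m_assoc)
  finally show ?thesis .
qed

section \<open>Presented groups\<close>

lemma word_on_simps [simp]:
  "word_on Gen []"
  "word_on Gen (a # w) \<longleftrightarrow> fst a \<in> Gen \<and> word_on Gen w"
  "word_on Gen (u @ v) \<longleftrightarrow> word_on Gen u \<and> word_on Gen v"
  by (auto simp: word_on_def)

lemma pres_eq_word_on: "pres_eq Gen R u v \<Longrightarrow> word_on Gen u \<and> word_on Gen v"
  by (induction rule: pres_eq.induct) auto

lemma pres_eq_append_left:
  "pres_eq Gen R u v \<Longrightarrow> word_on Gen w \<Longrightarrow> pres_eq Gen R (w @ u) (w @ v)"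
proof (induction rule: pres_eq.induct)
  case (cancel x u v b)
  then show ?case using pres_eq.cancel[of x Gen "w @ u" v R b] by simp
next
  case (relator r u v)
  then show ?case using pres_eq.relator[of r R Gen "w @ u" v] by simp
qed (auto intro: pres_eq.intros)

lemma pres_eq_append_right:
  "pres_eq Gen R u v \<Longrightarrow> word_on Gen w \<Longrightarrow> pres_eq Gen R (u @ w) (v @ w)"
proof (induction rule: pres_eq.induct)
  case (cancel x u v b)
  then show ?case using pres_eq.cancel[of x Gen u "v @ w" R b] by simp
next
  case (relator r u v)
  then show ?case using pres_eq.relator[of r R Gen u "v @ w"] by simp
qed (auto intro: pres_eq.intros)

lemma pres_eq_append:
  "pres_eq Gen R u u' \<Longrightarrow> pres_eq Gen R v v' \<Longrightarrow> pres_eq Gen R (u @ v) (u' @ v')"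
  by (meson pres_eq_append_left pres_eq_append_right pres_eq_word_on pres_eq.trans)

lemma pres_eq_cancel_pair: "x \<in> Gen \<Longrightarrow> pres_eq Gen R [(x, b), (x, \<not> b)] []"
  using pres_eq.cancel[of x Gen "[]" "[]" R b] by simp

lemma pres_eq_relator_Nil: "r \<in> R \<Longrightarrow> word_on Gen r \<Longrightarrow> pres_eq Gen R r []"
  using pres_eq.relator[of r R Gen "[]" "[]"] by simp

lemma pres_class_eq: "pres_eq Gen R u v \<Longrightarrow> pres_class Gen R u = pres_class Gen R v"
  unfolding pres_class_def by (rule Collect_cong) (meson pres_eq.sym pres_eq.trans)

lemma pres_eq_some_pres_class:
  "word_on Gen w \<Longrightarrow> pres_eq Gen R w (SOME v. v \<in> pres_class Gen R w)"
  unfolding pres_class_def by (simp add: someI[of "pres_eq Gen R w" w] pres_eq.refl)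

lemma carrier_presented_group:
  "carrier (presented_group Gen R) = {pres_class Gen R w | w. word_on Gen w}"
  by (simp add: presented_group_def)

lemma one_presented_group: "\<one>\<^bsub>presented_group Gen R\<^esub> = pres_class Gen R []"
  by (simp add: presented_group_def)

lemma mult_pres_class:
  "word_on Gen u \<Longrightarrow> word_on Gen v \<Longrightarrow>
    pres_class Gen R u \<otimes>\<^bsub>presented_group Gen R\<^esub> pres_class Gen R v = pres_class Gen R (u @ v)"
  unfolding presented_group_def
  by simp (metis pres_class_eq pres_eq_append pres_eq.sym pres_eq_some_pres_class)

definition word_inv :: "'a word \<Rightarrow> 'a word" where
  "word_inv w = rev (map (\<lambda>(x, b). (x, \<not> b)) w)"

lemma word_inv_Cons [simp]: "word_inv (a # w) = word_inv w @ [(fst a, \<not> snd a)]"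
  by (simp add: word_inv_def case_prod_beta)

lemma word_on_word_inv [simp]: "word_on Gen (word_inv w) = word_on Gen w"
  by (auto simp: word_inv_def word_on_def)

lemma pres_eq_word_inv_left: "word_on Gen w \<Longrightarrow> pres_eq Gen R (word_inv w @ w) []"
proof (induction w)
  case Nil
  then show ?case by (simp add: word_inv_def pres_eq.refl)
next
  case (Cons a w)
  obtain x b where a: "a = (x, b)" by force
  have "pres_eq Gen R (word_inv w @ ([(x, \<not> b), (x, \<not> \<not> b)] @ w)) (word_inv w @ ([] @ w))"
    using Cons a by (intro pres_eq_append pres_eq.refl pres_eq_cancel_pair) auto
  with Cons a show ?case by (auto intro: pres_eq.trans)
qed

lemma group_presented_group: "group (presented_group Gen R)"
proof (rule groupI)
  fix x
  assume "x \<in> carrier (presented_group Gen R)"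
  then obtain w where x: "x = pres_class Gen R w" and w: "word_on Gen w"
    by (auto simp: carrier_presented_group)
  have "pres_class Gen R (word_inv w) \<otimes>\<^bsub>presented_group Gen R\<^esub> x = \<one>\<^bsub>presented_group Gen R\<^esub>"
    using w by (simp add: x mult_pres_class one_presented_group pres_class_eq pres_eq_word_inv_left)
  then show "\<exists>y\<in>carrier (presented_group Gen R). y \<otimes>\<^bsub>presented_group Gen R\<^esub> x = \<one>\<^bsub>presented_group Gen R\<^esub>"
    using w by (auto simp: carrier_presented_group intro!: exI[of _ "word_inv w"])
qed (auto simp: carrier_presented_group one_presented_group mult_pres_class)

lemma gen_elem_closed: "x \<in> Gen \<Longrightarrow> gen_elem Gen R x \<in> carrier (presented_group Gen R)"
  by (auto simp: gen_elem_def carrier_presented_group)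

lemma pres_class_inverse_letter:
  assumes "x \<in> Gen"
  shows "pres_class Gen R [(x, True)] = inv\<^bsub>presented_group Gen R\<^esub> gen_elem Gen R x"
proof -
  interpret group "presented_group Gen R" by (rule group_presented_group)
  have "pres_class Gen R [(x, True)] \<otimes>\<^bsub>presented_group Gen R\<^esub> gen_elem Gen R x
      = \<one>\<^bsub>presented_group Gen R\<^esub>"
    using assms pres_eq_cancel_pair[of x Gen R True]
    by (simp add: gen_elem_def mult_pres_class one_presented_group pres_class_eq)
  with assms show ?thesis
    by (intro inv_equality[symmetric] gen_elem_closed) (auto simp: carrier_presented_group)
qed

lemma eval_word_Nil [simp]: "eval_word H f [] = \<one>\<^bsub>H\<^esub>"
  by (simp add: eval_word_def)

lemma eval_word_Cons [simp]:
  "eval_word H f (a # w) =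
     (if snd a then inv\<^bsub>H\<^esub> f (fst a) else f (fst a)) \<otimes>\<^bsub>H\<^esub> eval_word H f w"
  by (simp add: eval_word_def case_prod_beta)

lemma pres_class_eq_eval_word:
  "word_on Gen w \<Longrightarrow> pres_class Gen R w = eval_word (presented_group Gen R) (gen_elem Gen R) w"
proof (induction w)
  case Nil
  then show ?case by (simp add: one_presented_group)
next
  case (Cons a w)
  obtain x b where a: "a = (x, b)" by force
  have "pres_class Gen R (a # w) = pres_class Gen R [a] \<otimes>\<^bsub>presented_group Gen R\<^esub> pres_class Gen R w"
    using Cons mult_pres_class[of Gen "[a]" w R] by simp
  with Cons a show ?case
    by (cases b) (simp_all add: pres_class_inverse_letter gen_elem_def)
qed

lemma presented_group_induct [consumes 1, case_names one gen inv_gen]: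
  assumes "g \<in> carrier (presented_group Gen R)"
    and "P \<one>\<^bsub>presented_group Gen R\<^esub>"
    and "\<And>x g. x \<in> Gen \<Longrightarrow> g \<in> carrier (presented_group Gen R) \<Longrightarrow> P g \<Longrightarrow>
           P (gen_elem Gen R x \<otimes>\<^bsub>presented_group Gen R\<^esub> g)"
    and "\<And>x g. x \<in> Gen \<Longrightarrow> g \<in> carrier (presented_group Gen R) \<Longrightarrow> P g \<Longrightarrow>
           P (inv\<^bsub>presented_group Gen R\<^esub> gen_elem Gen R x \<otimes>\<^bsub>presented_group Gen R\<^esub> g)"
  shows "P g"
proof -
  interpret group "presented_group Gen R" by (rule group_presented_group)
  obtain w where g: "g = pres_class Gen R w" and w: "word_on Gen w"
    using assms(1) by (auto simp: carrier_presented_group)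
  have "eval_word (presented_group Gen R) (gen_elem Gen R) w \<in> carrier (presented_group Gen R)
      \<and> P (eval_word (presented_group Gen R) (gen_elem Gen R) w)"
    using w by (induction w) (auto simp: assms(2-4) gen_elem_closed)
  then show ?thesis using g w by (simp add: pres_class_eq_eval_word)
qed

lemma presented_group_commute:
  assumes "g \<in> carrier (presented_group Gen R)" "z \<in> carrier (presented_group Gen R)"
    and "\<And>x. x \<in> Gen \<Longrightarrow>
      z \<otimes>\<^bsub>presented_group Gen R\<^esub> gen_elem Gen R x = gen_elem Gen R x \<otimes>\<^bsub>presented_group Gen R\<^esub> z"
  shows "z \<otimes>\<^bsub>presented_group Gen R\<^esub> g = g \<otimes>\<^bsub>presented_group Gen R\<^esub> z"
proof -
  interpret group "presented_group Gen R" by (rule group_presented_group)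
  show ?thesis
    using assms(1)
  proof (induction rule: presented_group_induct)
    case one
    then show ?case using assms(2) by simp
  next
    case (gen x g)
    then show ?case using assms(2,3) by (intro commute_mult gen_elem_closed)
  next
    case (inv_gen x g)
    then show ?case using assms(2,3) by (intro commute_mult commute_inv inv_closed gen_elem_closed)
  qed
qed

lemma (in group) eval_word_closed:
  "f ` Gen \<subseteq> carrier G \<Longrightarrow> word_on Gen w \<Longrightarrow> eval_word G f w \<in> carrier G"
  by (induction w) auto

lemma (in group) eval_word_append:
  "f ` Gen \<subseteq> carrier G \<Longrightarrow> word_on Gen u \<Longrightarrow> word_on Gen v \<Longrightarrow>
    eval_word G f (u @ v) = eval_word G f u \<otimes> eval_word G f v"
  by (induction u) (auto simp: eval_word_closed m_assoc image_subset_iff)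

context group
begin

lemma eval_word_pres_eq:
  assumes "pres_eq Gen R u v" "f ` Gen \<subseteq> carrier G"
    and "\<And>r. r \<in> R \<Longrightarrow> word_on Gen r \<Longrightarrow> eval_word G f r = \<one>"
  shows "eval_word G f u = eval_word G f v"
  using assms(1)
proof (induction rule: pres_eq.induct)
  case (cancel x u v b)
  have "eval_word G f ([(x, b), (x, \<not> b)] @ v) = eval_word G f v"
    using cancel assms(2) by (auto simp: m_assoc[symmetric] eval_word_closed image_subset_iff)
  with cancel assms(2) show ?case
    by (simp add: eval_word_append del: eval_word_Cons)
next
  case (relator r u v)
  then show ?case using assms(2,3) by (simp add: eval_word_append eval_word_closed)
qed auto

lemma induced_hom_pres_class:
  assumes "word_on Gen w" "f ` Gen \<subseteq> carrier G"
    and "\<And>r. r \<in> R \<Longrightarrow> word_on Gen r \<Longrightarrow> eval_word G f r = \<one>"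
  shows "induced_hom G f (pres_class Gen R w) = eval_word G f w"
  unfolding induced_hom_def
  using eval_word_pres_eq[OF pres_eq_some_pres_class[OF assms(1)] assms(2,3)] by simp

lemma group_hom_induced_hom:
  assumes "f ` Gen \<subseteq> carrier G"
    and "\<And>r. r \<in> R \<Longrightarrow> word_on Gen r \<Longrightarrow> eval_word G f r = \<one>"
  shows "group_hom (presented_group Gen R) G (induced_hom G f)"
proof -
  have "induced_hom G f \<in> hom (presented_group Gen R) G"
  proof (rule homI)
    fix x
    assume "x \<in> carrier (presented_group Gen R)"
    then show "induced_hom G f x \<in> carrier G"
      using induced_hom_pres_class[OF _ assms] eval_word_closed[OF assms(1)]
      by (auto simp: carrier_presented_group)
  next
    fix x y
    assume "x \<in> carrier (presented_group Gen R)" "y \<in> carrier (presented_group Gen R)"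
    then obtain u v where "x = pres_class Gen R u" "word_on Gen u"
      and "y = pres_class Gen R v" "word_on Gen v"
      by (auto simp: carrier_presented_group)
    then show "induced_hom G f (x \<otimes>\<^bsub>presented_group Gen R\<^esub> y) = induced_hom G f x \<otimes> induced_hom G f y"
      by (simp add: mult_pres_class induced_hom_pres_class[OF _ assms] eval_word_append[OF assms(1)])
  qed
  then show ?thesis
    by (simp add: group_hom.intro group_hom_axioms.intro group_presented_group is_group)
qed

end

section \<open>Coxeter groups and the Coxeter quandle\<close>

locale coxeter_data =
  fixes S :: "'a set" and m :: "'a \<Rightarrow> 'a \<Rightarrow> enat"
begin

abbreviation W where "W \<equiv> coxeter_group S m"
abbreviation Q where "Q \<equiv> coxeter_quandle S m"

sublocale W: group W
  unfolding coxeter_group_def by (rule group_presented_group)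

lemma coxeter_gen_closed: "s \<in> S \<Longrightarrow> coxeter_gen S m s \<in> carrier W"
  unfolding coxeter_gen_def coxeter_group_def by (rule gen_elem_closed)

lemma quandle_closed: "x \<in> Q \<Longrightarrow> x \<in> carrier W"
  unfolding coxeter_quandle_def by (auto intro: coxeter_gen_closed)

lemma quandle_conj_closed:
  assumes "x \<in> Q" "g \<in> carrier W"
  shows "inv\<^bsub>W\<^esub> g \<otimes>\<^bsub>W\<^esub> x \<otimes>\<^bsub>W\<^esub> g \<in> Q"
proof -
  obtain w s where x: "x = inv\<^bsub>W\<^esub> w \<otimes>\<^bsub>W\<^esub> coxeter_gen S m s \<otimes>\<^bsub>W\<^esub> w"
    and w: "w \<in> carrier W" and s: "s \<in> S"
    using assms(1) unfolding coxeter_quandle_def by auto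
  have "inv\<^bsub>W\<^esub> g \<otimes>\<^bsub>W\<^esub> x \<otimes>\<^bsub>W\<^esub> g
      = inv\<^bsub>W\<^esub> (w \<otimes>\<^bsub>W\<^esub> g) \<otimes>\<^bsub>W\<^esub> coxeter_gen S m s \<otimes>\<^bsub>W\<^esub> (w \<otimes>\<^bsub>W\<^esub> g)"
    using w s assms(2) by (simp add: x coxeter_gen_closed W.m_assoc W.inv_mult_group)
  with w s assms(2) show ?thesis unfolding coxeter_quandle_def by blast
qed

end

locale coxeter_system = coxeter_data +
  assumes coxeter_matrix: "coxeter_matrix S m"
begin

lemma coxeter_gen_inv:
  assumes "s \<in> S"
  shows "inv\<^bsub>W\<^esub> coxeter_gen S m s = coxeter_gen S m s"
proof -
  have "m s s = enat 1"
    using coxeter_matrix assms by (simp add: coxeter_matrix_def one_enat_def)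
  then have "[(s, False), (s, False)] \<in> coxeter_rels S m"
    unfolding coxeter_rels_def using assms by force
  then have "pres_eq S (coxeter_rels S m) [(s, False), (s, False)] []"
    using assms by (intro pres_eq_relator_Nil) auto
  then have "coxeter_gen S m s \<otimes>\<^bsub>W\<^esub> coxeter_gen S m s = \<one>\<^bsub>W\<^esub>"
    unfolding coxeter_gen_def gen_elem_def coxeter_group_def
    using assms by (simp add: mult_pres_class one_presented_group pres_class_eq)
  then show ?thesis using assms by (simp add: W.inv_equality coxeter_gen_closed)
qed

lemma quandle_inv:
  assumes "x \<in> Q"
  shows "inv\<^bsub>W\<^esub> x = x"
proof -
  obtain w s where x: "x = inv\<^bsub>W\<^esub> w \<otimes>\<^bsub>W\<^esub> coxeter_gen S m s \<otimes>\<^bsub>W\<^esub> w"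
    and w: "w \<in> carrier W" and s: "s \<in> S"
    using assms unfolding coxeter_quandle_def by auto
  then show ?thesis
    by (simp add: coxeter_gen_closed coxeter_gen_inv W.inv_mult_group W.m_assoc)
qed

lemma quandle_square: "x \<in> Q \<Longrightarrow> x \<otimes>\<^bsub>W\<^esub> x = \<one>\<^bsub>W\<^esub>"
  using W.r_inv[of x] by (simp add: quandle_inv quandle_closed)

lemma qop_eq_conj: "y \<in> Q \<Longrightarrow> qop S m x y = inv\<^bsub>W\<^esub> y \<otimes>\<^bsub>W\<^esub> x \<otimes>\<^bsub>W\<^esub> y"
  by (simp add: qop_def quandle_inv)

lemma qop_closed: "x \<in> Q \<Longrightarrow> y \<in> Q \<Longrightarrow> qop S m x y \<in> Q"
  by (simp add: qop_eq_conj quandle_conj_closed quandle_closed)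

lemma qop_qop:
  assumes "x \<in> Q" "y \<in> Q"
  shows "qop S m (qop S m x y) y = x"
proof -
  have "qop S m (qop S m x y) y = inv\<^bsub>W\<^esub> y \<otimes>\<^bsub>W\<^esub> (y \<otimes>\<^bsub>W\<^esub> x \<otimes>\<^bsub>W\<^esub> y) \<otimes>\<^bsub>W\<^esub> y"
    using assms by (simp add: qop_def quandle_inv)
  also have "\<dots> = x"
    using assms
    by (simp add: quandle_closed W.m_assoc[symmetric]) (simp add: quandle_closed W.m_assoc quandle_square)
  finally show ?thesis .
qed

section \<open>The adjoint group of the Coxeter quandle\<close>

abbreviation Ad where "Ad \<equiv> presented_group Q (adj_rels S m)"
abbreviation e where "e \<equiv> gen_elem Q (adj_rels S m)"
abbreviation \<phi> where "\<phi> \<equiv> adj_phi S m"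

sublocale Ad: group Ad by (rule group_presented_group)

lemma eval_word_adj_rels:
  assumes "r \<in> adj_rels S m"
  shows "eval_word W id r = \<one>\<^bsub>W\<^esub>"
proof -
  obtain x y where r: "r = [(y, True), (x, False), (y, False), (qop S m x y, True)]"
    and x: "x \<in> Q" and y: "y \<in> Q"
    using assms unfolding adj_rels_def by auto
  then show ?thesis by (simp add: qop_eq_conj quandle_closed W.m_assoc[symmetric])
qed

lemma adj_phi_pres_class: "word_on Q w \<Longrightarrow> \<phi> (pres_class Q (adj_rels S m) w) = eval_word W id w"
  unfolding adj_phi_def
  by (rule W.induced_hom_pres_class) (auto simp: quandle_closed eval_word_adj_rels)

sublocale \<phi>: group_hom Ad W \<phi>
  unfolding adj_phi_def
  by (rule W.group_hom_induced_hom) (auto simp: quandle_closed eval_word_adj_rels)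

lemma adj_phi_gen: "x \<in> Q \<Longrightarrow> \<phi> (e x) = x"
  using adj_phi_pres_class[of "[(x, False)]"] by (simp add: gen_elem_def quandle_closed)

lemma adj_gen_conj:
  assumes "x \<in> Q" "y \<in> Q"
  shows "inv\<^bsub>Ad\<^esub> e y \<otimes>\<^bsub>Ad\<^esub> e x \<otimes>\<^bsub>Ad\<^esub> e y = e (qop S m x y)"
proof -
  let ?r = "[(y, True), (x, False), (y, False), (qop S m x y, True)]"
  have r: "?r \<in> adj_rels S m" "word_on Q ?r"
    using assms qop_closed unfolding adj_rels_def by auto
  have "eval_word Ad e ?r = pres_class Q (adj_rels S m) ?r"
    using r(2) by (rule pres_class_eq_eval_word[symmetric])
  also have "\<dots> = \<one>\<^bsub>Ad\<^esub>"
    using r by (simp add: one_presented_group pres_class_eq pres_eq_relator_Nil)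
  finally show ?thesis
    using assms by (simp add: gen_elem_closed qop_closed Ad.m_assoc[symmetric] Ad.inv_solve_right')
qed

lemma adj_gen_conj_inv:
  assumes "x \<in> Q" "y \<in> Q"
  shows "e y \<otimes>\<^bsub>Ad\<^esub> e x \<otimes>\<^bsub>Ad\<^esub> inv\<^bsub>Ad\<^esub> e y = e (qop S m x y)"
proof -
  have "e (qop S m x y) \<otimes>\<^bsub>Ad\<^esub> e y = e y \<otimes>\<^bsub>Ad\<^esub> e x"
    using adj_gen_conj[OF qop_closed[OF assms] assms(2)] assms
    by (simp add: qop_qop gen_elem_closed qop_closed Ad.m_assoc Ad.inv_solve_left')
  with assms show ?thesis
    by (simp add: gen_elem_closed qop_closed Ad.m_assoc[symmetric] Ad.inv_solve_right')
qed

lemma adj_conj_mult: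
  assumes gh: "g \<in> carrier Ad" "h \<in> carrier Ad"
    and g: "\<And>x. x \<in> Q \<Longrightarrow> inv\<^bsub>Ad\<^esub> g \<otimes>\<^bsub>Ad\<^esub> e x \<otimes>\<^bsub>Ad\<^esub> g = e (inv\<^bsub>W\<^esub> \<phi> g \<otimes>\<^bsub>W\<^esub> x \<otimes>\<^bsub>W\<^esub> \<phi> g)"
    and h: "\<And>x. x \<in> Q \<Longrightarrow> inv\<^bsub>Ad\<^esub> h \<otimes>\<^bsub>Ad\<^esub> e x \<otimes>\<^bsub>Ad\<^esub> h = e (inv\<^bsub>W\<^esub> \<phi> h \<otimes>\<^bsub>W\<^esub> x \<otimes>\<^bsub>W\<^esub> \<phi> h)"
    and x: "x \<in> Q"
  shows "inv\<^bsub>Ad\<^esub> (h \<otimes>\<^bsub>Ad\<^esub> g) \<otimes>\<^bsub>Ad\<^esub> e x \<otimes>\<^bsub>Ad\<^esub> (h \<otimes>\<^bsub>Ad\<^esub> g)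
    = e (inv\<^bsub>W\<^esub> \<phi> (h \<otimes>\<^bsub>Ad\<^esub> g) \<otimes>\<^bsub>W\<^esub> x \<otimes>\<^bsub>W\<^esub> \<phi> (h \<otimes>\<^bsub>Ad\<^esub> g))"
proof -
  let ?x' = "inv\<^bsub>W\<^esub> \<phi> h \<otimes>\<^bsub>W\<^esub> x \<otimes>\<^bsub>W\<^esub> \<phi> h"
  have x': "?x' \<in> Q" using gh x by (simp add: quandle_conj_closed)
  have "inv\<^bsub>Ad\<^esub> (h \<otimes>\<^bsub>Ad\<^esub> g) \<otimes>\<^bsub>Ad\<^esub> e x \<otimes>\<^bsub>Ad\<^esub> (h \<otimes>\<^bsub>Ad\<^esub> g)
      = inv\<^bsub>Ad\<^esub> g \<otimes>\<^bsub>Ad\<^esub> (inv\<^bsub>Ad\<^esub> h \<otimes>\<^bsub>Ad\<^esub> e x \<otimes>\<^bsub>Ad\<^esub> h) \<otimes>\<^bsub>Ad\<^esub> g"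
    using gh x by (simp add: gen_elem_closed Ad.inv_mult_group Ad.m_assoc)
  also have "\<dots> = e (inv\<^bsub>W\<^esub> \<phi> g \<otimes>\<^bsub>W\<^esub> ?x' \<otimes>\<^bsub>W\<^esub> \<phi> g)"
    using x x' by (simp add: h g)
  also have "\<dots> = e (inv\<^bsub>W\<^esub> \<phi> (h \<otimes>\<^bsub>Ad\<^esub> g) \<otimes>\<^bsub>W\<^esub> x \<otimes>\<^bsub>W\<^esub> \<phi> (h \<otimes>\<^bsub>Ad\<^esub> g))"
    using gh x by (simp add: quandle_closed W.inv_mult_group W.m_assoc)
  finally show ?thesis .
qed

lemma adj_conj_gen:
  assumes "g \<in> carrier Ad" "x \<in> Q"
  shows "inv\<^bsub>Ad\<^esub> g \<otimes>\<^bsub>Ad\<^esub> e x \<otimes>\<^bsub>Ad\<^esub> g = e (inv\<^bsub>W\<^esub> \<phi> g \<otimes>\<^bsub>W\<^esub> x \<otimes>\<^bsub>W\<^esub> \<phi> g)"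
  using assms
proof (induction arbitrary: x rule: presented_group_induct)
  case one
  then show ?case by (simp add: gen_elem_closed quandle_closed)
next
  case (gen y g)
  have "inv\<^bsub>Ad\<^esub> e y \<otimes>\<^bsub>Ad\<^esub> e x \<otimes>\<^bsub>Ad\<^esub> e y = e (inv\<^bsub>W\<^esub> \<phi> (e y) \<otimes>\<^bsub>W\<^esub> x \<otimes>\<^bsub>W\<^esub> \<phi> (e y))"
    if "x \<in> Q" for x
    using gen(1) that by (simp add: adj_gen_conj adj_phi_gen qop_eq_conj)
  with gen show ?case by (intro adj_conj_mult gen_elem_closed)
next
  case (inv_gen y g)
  have "inv\<^bsub>Ad\<^esub> (inv\<^bsub>Ad\<^esub> e y) \<otimes>\<^bsub>Ad\<^esub> e x \<otimes>\<^bsub>Ad\<^esub> inv\<^bsub>Ad\<^esub> e y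
      = e (inv\<^bsub>W\<^esub> \<phi> (inv\<^bsub>Ad\<^esub> e y) \<otimes>\<^bsub>W\<^esub> x \<otimes>\<^bsub>W\<^esub> \<phi> (inv\<^bsub>Ad\<^esub> e y))"
    if "x \<in> Q" for x
    using inv_gen(1) that
    by (simp add: adj_gen_conj_inv gen_elem_closed adj_phi_gen qop_eq_conj quandle_inv)
  with inv_gen show ?case by (intro adj_conj_mult Ad.inv_closed gen_elem_closed)
qed

lemma kernel_commutes_gen:
  assumes "z \<in> kernel Ad W \<phi>" "x \<in> Q"
  shows "z \<otimes>\<^bsub>Ad\<^esub> e x = e x \<otimes>\<^bsub>Ad\<^esub> z"
proof -
  have z: "z \<in> carrier Ad" "\<phi> z = \<one>\<^bsub>W\<^esub>" using assms(1) by (auto simp: kernel_def)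
  then have "inv\<^bsub>Ad\<^esub> z \<otimes>\<^bsub>Ad\<^esub> e x \<otimes>\<^bsub>Ad\<^esub> z = e x"
    using assms(2) by (simp add: adj_conj_gen quandle_closed)
  with z(1) assms(2) show ?thesis
    by (simp add: gen_elem_closed Ad.m_assoc Ad.inv_solve_left')
qed

lemma kernel_central:
  assumes "z \<in> kernel Ad W \<phi>" "g \<in> carrier Ad"
  shows "z \<otimes>\<^bsub>Ad\<^esub> g = g \<otimes>\<^bsub>Ad\<^esub> z"
proof (rule presented_group_commute[OF assms(2)])
  show "z \<in> carrier Ad" using assms(1) by (simp add: kernel_def)
qed (rule kernel_commutes_gen[OF assms(1)])

end

theorem lemma2p5:
  fixes S :: "'a set" and m :: "'a \<Rightarrow> 'a \<Rightarrow> enat"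
  assumes "coxeter_matrix S m"
  shows "central_subgroup (kernel (adj_group S m) (coxeter_group S m) (adj_phi S m))
           (adj_group S m)"
proof -
  interpret coxeter_system S m by unfold_locales (rule assms)
  show ?thesis
    unfolding central_subgroup_def adj_group_def
    using \<phi>.subgroup_kernel kernel_central by blast
qed

end
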